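(* Let $(X,T)$ be a dynamical system. Then for every $\delta>0$ the family $\mathcal{S}_T(\delta)$ is $+$ invariant. Furthermore, the following are equivalent: (1) $(X,T)$ is transitively sensitive; (2) there exist $\delta>0$ and a dense $G_\delta$ subset $X_0\subset X$ such that $\omega_{\mathcal{S}_T(\delta)}(x)=X$ for each $x\in X_0$; (3) there exist $\delta>0$ and $x\in X$ with $\omega_{\mathcal{S}_T(\delta)}(x)=X$.
   Context: A dynamical system $(X,T)$: $X$ is a compact metric space (metric $d$) with more than one point and without isolated points, $T:X\to X$ a continuous surjection. "Opene" means open and nonempty. $S_T(U,\delta)=\{n\in\mathbb{Z}_+:\exists x_1,x_2\in U,\ d(T^nx_1,T^nx_2)>\delta\}$, $N_T(U,V)=\{n\in\mathbb{Z}_+:U\cap T^{-n}V\neq\varnothing\}$. $\mathcal{S}_T(\delta)$ is the family of all subsets of $\mathbb{Z}_+$ containing $S_T(U,\delta)$ for some opene $U$. For a family $\mathcal{F}$, $\omega_{\mathcal{F}}(x)=\bigcap_{F\in\mathcal{F}}\overline{\{T^ix:i\in F\}}$. A family $\mathcal{F}$ is $+$ invariant if for every $i\in\mathbb{Z}_+$, $F\in\mathcal{F}$ implies $\{i+j:j\in F\}\in\mathcal{F}$. $(X,T)$ is transitively sensitive if there is $\delta>0$ with $S_T(W,\delta)\cap N_T(U,V)\neq\varnothing$ for all opene $U,V,W\subset X$. *)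

theory Defs
  imports "HOL-Analysis.Analysis"
begin

text \<open>Dynamical system (X,T): X a compact subset of a metric space type, T continuous
  surjection of X onto itself. Z_+ is rendered as nat. "Opene" = open in X and nonempty.\<close>

definition opene :: "'a::metric_space set \<Rightarrow> 'a set \<Rightarrow> bool" where
  "opene X U \<longleftrightarrow> openin (top_of_set X) U \<and> U \<noteq> {}"

definition S_T :: "('a::metric_space \<Rightarrow> 'a) \<Rightarrow> 'a set \<Rightarrow> real \<Rightarrow> nat set" where
  "S_T T U \<delta> = {n. \<exists>x1\<in>U. \<exists>x2\<in>U. dist ((T ^^ n) x1) ((T ^^ n) x2) > \<delta>}"

definition N_T :: "('a \<Rightarrow> 'a) \<Rightarrow> 'a set \<Rightarrow> 'a set \<Rightarrow> nat set" where
  "N_T T U V = {n. U \<inter> (T ^^ n) -` V \<noteq> {}}"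

definition S_fam :: "'a::metric_space set \<Rightarrow> ('a \<Rightarrow> 'a) \<Rightarrow> real \<Rightarrow> nat set set" where
  "S_fam X T \<delta> = {F. \<exists>U. opene X U \<and> S_T T U \<delta> \<subseteq> F}"

definition omega_F :: "('a::topological_space \<Rightarrow> 'a) \<Rightarrow> nat set set \<Rightarrow> 'a \<Rightarrow> 'a set" where
  "omega_F T \<F> x = (\<Inter>F\<in>\<F>. closure {(T ^^ i) x | i. i \<in> F})"

definition plus_invariant :: "nat set set \<Rightarrow> bool" where
  "plus_invariant \<F> \<longleftrightarrow> (\<forall>i F. F \<in> \<F> \<longrightarrow> (\<lambda>j. i + j) ` F \<in> \<F>)"

definition transitively_sensitive :: "'a::metric_space set \<Rightarrow> ('a \<Rightarrow> 'a) \<Rightarrow> bool" where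
  "transitively_sensitive X T \<longleftrightarrow> (\<exists>\<delta>>0. \<forall>U V W. opene X U \<longrightarrow> opene X V \<longrightarrow> opene X W \<longrightarrow>
      S_T T W \<delta> \<inter> N_T T U V \<noteq> {})"

end

theory Submission
  imports Defs
begin

text \<open>
  Shift invariance: if \<open>T\<^sup>i x\<^sub>0 \<in> W\<close>, the opene set \<open>W'\<close> of points of \<open>T\<^sup>-\<^sup>i W\<close> that stay
  \<open>\<delta>/2\<close>-close to the orbit of \<open>x\<^sub>0\<close> up to time \<open>i\<close> cannot \<open>\<delta>\<close>-separate before time \<open>i\<close>,
  so \<open>S\<^sub>T(W',\<delta>) \<subseteq> i + S\<^sub>T(W,\<delta>)\<close>.
  \<open>\<omega>\<close> of \<open>x\<close> with respect to \<open>\<S>\<^sub>T(\<delta>)\<close> is \<open>X\<close> iff for all opene \<open>W, V\<close> some time in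
  \<open>S\<^sub>T(W,\<delta>)\<close> brings \<open>x\<close> into \<open>V\<close>. Under transitive sensitivity the points with this
  property for a countable base of pairs \<open>(W, V)\<close> form a countable intersection of dense
  open sets, hence a dense \<open>G\<^sub>\<delta>\<close> by Baire. Conversely, if \<open>x\<close> is such a point, it enters
  \<open>U\<close> at some time \<open>m\<close>, and by shift invariance it later enters \<open>V\<close> at a time \<open>m + n\<close>
  with \<open>n \<in> S\<^sub>T(W,\<delta>)\<close>, so \<open>n \<in> S\<^sub>T(W,\<delta>) \<inter> N\<^sub>T(U,V)\<close>.
\<close>

lemma funpow_image_subset: "T ` X \<subseteq> X \<Longrightarrow> (T ^^ n) ` X \<subseteq> X"
  by (induction n) (auto simp: image_subset_iff)

lemma funpow_image_eq: "T ` X = X \<Longrightarrow> (T ^^ n) ` X = X"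
proof (induction n)
  case (Suc n)
  have "(T ^^ Suc n) ` X = T ` ((T ^^ n) ` X)"
    by (simp add: image_image)
  with Suc show ?case by simp
qed simp

lemma continuous_on_funpow:
  assumes "continuous_on X T" "T ` X \<subseteq> X"
  shows "continuous_on X (T ^^ n)"
proof (induction n)
  case (Suc n)
  have "continuous_on ((T ^^ n) ` X) T"
    using assms(1) funpow_image_subset [OF assms(2)] by (rule continuous_on_subset)
  from continuous_on_compose [OF Suc this] show ?case by simp
qed simp

lemma openin_funpow_preimage:
  assumes "continuous_on X T" "T ` X \<subseteq> X" "openin (top_of_set X) V"
  shows "openin (top_of_set X) (X \<inter> (T ^^ n) -` V)"
  using continuous_openin_preimage [OF continuous_on_funpow [OF assms(1,2)] _ assms(3)]
    funpow_image_subset [OF assms(2)] by (simp add: image_subset_iff_funcset)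

lemma openin_orbit_segment_close:
  assumes "continuous_on X T" "T ` X \<subseteq> X"
  shows "openin (top_of_set X) {x \<in> X. \<forall>j<k. dist ((T ^^ j) x) ((T ^^ j) x0) < \<epsilon>}"
proof (induction k)
  case (Suc k)
  have "{x \<in> X. \<forall>j<Suc k. dist ((T ^^ j) x) ((T ^^ j) x0) < \<epsilon>}
      = {x \<in> X. \<forall>j<k. dist ((T ^^ j) x) ((T ^^ j) x0) < \<epsilon>}
        \<inter> (X \<inter> (T ^^ k) -` ball ((T ^^ k) x0) \<epsilon>)"
    by (auto simp: less_Suc_eq dist_commute)
  then show ?case
    using Suc continuous_openin_preimage_gen [OF continuous_on_funpow [OF assms] open_ball]
    by (simp add: openin_Int)
qed simp

lemma S_T_mono: "W \<subseteq> W' \<Longrightarrow> S_T T W \<delta> \<subseteq> S_T T W' \<delta>"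
  by (auto simp: S_T_def)

lemma S_T_shift:
  assumes cT: "continuous_on X T" and sT: "T ` X = X" and W: "opene X W" and "\<delta> > 0"
  obtains W' where "opene X W'" "S_T T W' \<delta> \<subseteq> (\<lambda>j. i + j) ` S_T T W \<delta>"
proof -
  from W obtain w where w: "w \<in> W" and Wo: "openin (top_of_set X) W"
    by (auto simp: opene_def)
  obtain x0 where x0: "x0 \<in> X" "(T ^^ i) x0 = w"
    using funpow_image_eq [OF sT, of i] w openin_imp_subset [OF Wo] by force
  define W' where "W' = {x \<in> X. \<forall>j<i. dist ((T ^^ j) x) ((T ^^ j) x0) < \<delta>/2}
    \<inter> (X \<inter> (T ^^ i) -` W)"
  have "opene X W'"
    using openin_orbit_segment_close [OF cT, of i x0 "\<delta>/2"] openin_funpow_preimage [OF cT _ Wo]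
      sT x0 w \<open>\<delta> > 0\<close> by (auto simp: opene_def W'_def openin_Int)
  moreover have "S_T T W' \<delta> \<subseteq> (\<lambda>j. i + j) ` S_T T W \<delta>"
  proof
    fix n assume "n \<in> S_T T W' \<delta>"
    then obtain x1 x2 where x: "x1 \<in> W'" "x2 \<in> W'" "dist ((T ^^ n) x1) ((T ^^ n) x2) > \<delta>"
      by (auto simp: S_T_def)
    have "i \<le> n"
    proof (rule ccontr)
      assume "\<not> i \<le> n"
      then have "dist ((T ^^ n) x1) ((T ^^ n) x0) < \<delta>/2" "dist ((T ^^ n) x2) ((T ^^ n) x0) < \<delta>/2"
        using x by (auto simp: W'_def)
      then have "dist ((T ^^ n) x1) ((T ^^ n) x2) < \<delta>" by (rule dist_triangle_half_l)
      with x show False by simp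
    qed
    then have split: "(T ^^ n) y = (T ^^ (n - i)) ((T ^^ i) y)" for y
      by (metis funpow_add le_add_diff_inverse2 comp_apply)
    have "(T ^^ i) x1 \<in> W" "(T ^^ i) x2 \<in> W"
      using x by (auto simp: W'_def)
    then have "n - i \<in> S_T T W \<delta>"
      using x(3) unfolding S_T_def split by blast
    then show "n \<in> (\<lambda>j. i + j) ` S_T T W \<delta>"
      using \<open>i \<le> n\<close> by (auto intro!: image_eqI [where x = "n - i"])
  qed
  ultimately show ?thesis by (rule that)
qed

lemma plus_invariant_S_fam:
  assumes "continuous_on X T" "T ` X = X" "\<delta> > 0"
  shows "plus_invariant (S_fam X T \<delta>)"
  unfolding plus_invariant_def
proof (intro allI impI)
  fix i F assume "F \<in> S_fam X T \<delta>"
  then obtain U where U: "opene X U" "S_T T U \<delta> \<subseteq> F"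
    by (auto simp: S_fam_def)
  obtain W' where "opene X W'" "S_T T W' \<delta> \<subseteq> (\<lambda>j. i + j) ` S_T T U \<delta>"
    using S_T_shift [OF assms(1,2) U(1) assms(3)] .
  moreover have "(\<lambda>j. i + j) ` S_T T U \<delta> \<subseteq> (\<lambda>j. i + j) ` F"
    using U(2) by (rule image_mono)
  ultimately show "(\<lambda>j. i + j) ` F \<in> S_fam X T \<delta>"
    unfolding S_fam_def by blast
qed

definition S_transitive_point :: "'a::metric_space set \<Rightarrow> ('a \<Rightarrow> 'a) \<Rightarrow> real \<Rightarrow> 'a \<Rightarrow> bool" where
  "S_transitive_point X T \<delta> x \<longleftrightarrow>
     (\<forall>W V. opene X W \<longrightarrow> opene X V \<longrightarrow> (\<exists>i\<in>S_T T W \<delta>. (T ^^ i) x \<in> V))"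

lemma opene_Int_ball: "y \<in> X \<Longrightarrow> e > 0 \<Longrightarrow> opene X (X \<inter> ball y e)"
  by (auto simp: opene_def openin_open_Int)

lemma omega_F_S_fam_eq_iff:
  assumes "compact X" "T ` X = X" "x \<in> X"
  shows "omega_F T (S_fam X T \<delta>) x = X \<longleftrightarrow> S_transitive_point X T \<delta> x"
proof
  assume om: "omega_F T (S_fam X T \<delta>) x = X"
  show "S_transitive_point X T \<delta> x"
    unfolding S_transitive_point_def
  proof (intro allI impI)
    fix W V assume W: "opene X W" and V: "opene X V"
    then obtain v Q where v: "v \<in> V" and Q: "open Q" "V = X \<inter> Q"
      by (auto simp: opene_def openin_open)
    have "S_T T W \<delta> \<in> S_fam X T \<delta>"
      using W by (auto simp: S_fam_def)
    with om v Q have "v \<in> closure {(T ^^ i) x | i. i \<in> S_T T W \<delta>}"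
      unfolding omega_F_def by blast
    moreover have "v \<in> Q" using v Q by blast
    ultimately obtain i where "i \<in> S_T T W \<delta>" "(T ^^ i) x \<in> Q"
      using \<open>open Q\<close> by (auto simp: closure_iff_nhds_not_empty)
    moreover have "(T ^^ i) x \<in> X"
      using funpow_image_eq [OF assms(2)] assms(3) by blast
    ultimately show "\<exists>i\<in>S_T T W \<delta>. (T ^^ i) x \<in> V"
      using Q by blast
  qed
next
  assume good: "S_transitive_point X T \<delta> x"
  have "S_T T X \<delta> \<in> S_fam X T \<delta>"
    using assms(3) by (auto simp: S_fam_def opene_def)
  then have "omega_F T (S_fam X T \<delta>) x \<subseteq> closure {(T ^^ i) x | i. i \<in> S_T T X \<delta>}"
    unfolding omega_F_def by blast
  also have "\<dots> \<subseteq> X"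
    using funpow_image_eq [OF assms(2)] assms(3) compact_imp_closed [OF assms(1)]
    by (intro closure_minimal) auto
  finally have "omega_F T (S_fam X T \<delta>) x \<subseteq> X" .
  moreover have "y \<in> closure {(T ^^ i) x | i. i \<in> F}"
    if y: "y \<in> X" and F: "F \<in> S_fam X T \<delta>" for y F
    unfolding closure_approachable
  proof (intro allI impI)
    fix e :: real assume "e > 0"
    obtain U where U: "opene X U" "S_T T U \<delta> \<subseteq> F"
      using F by (auto simp: S_fam_def)
    obtain i where "i \<in> S_T T U \<delta>" "(T ^^ i) x \<in> X \<inter> ball y e"
      using good U(1) opene_Int_ball [OF y \<open>e > 0\<close>] unfolding S_transitive_point_def by blast
    with U(2) have "(T ^^ i) x \<in> {(T ^^ i) x | i. i \<in> F}" "dist ((T ^^ i) x) y < e"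
      by (auto simp: dist_commute)
    then show "\<exists>z\<in>{(T ^^ i) x | i. i \<in> F}. dist z y < e" ..
  qed
  ultimately show "omega_F T (S_fam X T \<delta>) x = X"
    unfolding omega_F_def by blast
qed

lemma transitively_sensitive_if_S_transitive_point:
  assumes cT: "continuous_on X T" and sT: "T ` X = X" and "\<delta> > 0" "x \<in> X"
    and x: "S_transitive_point X T \<delta> x"
  shows "transitively_sensitive X T"
  unfolding transitively_sensitive_def
proof (intro exI [of _ \<delta>] conjI allI impI)
  fix U V W assume U: "opene X U" and V: "opene X V" and W: "opene X W"
  have "opene X X"
    using \<open>x \<in> X\<close> by (auto simp: opene_def)
  then obtain m where m: "(T ^^ m) x \<in> U"
    using x U unfolding S_transitive_point_def by blast
  obtain W' where W': "opene X W'" "S_T T W' \<delta> \<subseteq> (\<lambda>j. m + j) ` S_T T W \<delta>"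
    using S_T_shift [OF cT sT W \<open>\<delta> > 0\<close>] .
  obtain k where k: "k \<in> S_T T W' \<delta>" "(T ^^ k) x \<in> V"
    using x W'(1) V unfolding S_transitive_point_def by blast
  then obtain n where n: "n \<in> S_T T W \<delta>" "k = m + n"
    using W'(2) by blast
  have "(T ^^ n) ((T ^^ m) x) \<in> V"
    using k(2) n(2) funpow_add [of n m T] by (simp add: add.commute)
  with m have "n \<in> N_T T U V"
    by (auto simp: N_T_def)
  with n(1) show "S_T T W \<delta> \<inter> N_T T U V \<noteq> {}" by blast
qed (fact \<open>\<delta> > 0\<close>)

lemma compact_countable_opene_base:
  fixes X :: "'a::metric_space set"
  assumes "compact X"
  obtains B where "countable B" "\<And>b. b \<in> B \<Longrightarrow> opene X b"
    "\<And>W. opene X W \<Longrightarrow> \<exists>b\<in>B. b \<subseteq> W"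
proof -
  have "\<exists>k. finite k \<and> k \<subseteq> X \<and> X \<subseteq> (\<Union>c\<in>k. ball c (1 / Suc m))" for m :: nat
    using seq_compact_imp_totally_bounded [OF compact_imp_seq_compact [OF assms]] by simp
  then obtain K where K: "\<And>m. finite (K m) \<and> K m \<subseteq> X \<and> X \<subseteq> (\<Union>c\<in>K m. ball c (1 / Suc m))"
    by metis
  define B where "B = (\<Union>m. (\<lambda>c. X \<inter> ball c (1 / Suc m)) ` K m)"
  have "countable B"
    unfolding B_def using K by (intro countable_UN) (auto intro: countable_finite)
  moreover have "opene X b" if b: "b \<in> B" for b
  proof -
    obtain m c where "c \<in> K m" "b = X \<inter> ball c (1 / Suc m)"
      using b unfolding B_def by blast
    with K [of m] show ?thesis
      by (auto intro: opene_Int_ball)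
  qed
  moreover have "\<exists>b\<in>B. b \<subseteq> W" if W: "opene X W" for W
  proof -
    obtain w Q where w: "w \<in> W" and Q: "open Q" "W = X \<inter> Q"
      using W by (auto simp: opene_def openin_open)
    obtain r where r: "r > 0" "ball w r \<subseteq> Q"
      using Q w open_contains_ball by blast
    obtain m :: nat where m: "1 / Suc m < r / 2"
      using reals_Archimedean [of "r / 2"] r(1) by (auto simp: inverse_eq_divide)
    obtain c where c: "c \<in> K m" "dist c w < 1 / Suc m"
      using K [of m] w Q by (auto simp: dist_commute)
    have "X \<inter> ball c (1 / Suc m) \<subseteq> W"
    proof
      fix z assume z: "z \<in> X \<inter> ball c (1 / Suc m)"
      have "dist w z \<le> dist w c + dist c z" by (rule dist_triangle)
      also have "\<dots> < r" using z c m by (simp add: dist_commute)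
      finally show "z \<in> W" using z r Q by auto
    qed
    moreover have "X \<inter> ball c (1 / Suc m) \<in> B"
      using c unfolding B_def by blast
    ultimately show ?thesis by blast
  qed
  ultimately show ?thesis by (rule that)
qed

lemma compact_Baire:
  fixes X :: "'a::metric_space set"
  assumes "compact X" "countable C"
    and "\<And>S. S \<in> C \<Longrightarrow> openin (top_of_set X) S \<and> X \<subseteq> closure S"
  shows "X \<subseteq> closure (X \<inter> \<Inter>C)"
proof -
  have "locally_compact_space (top_of_set X)"
    using assms(1) by (simp add: compact_imp_locally_compact_space compact_space_subtopology)
  moreover have "regular_space (top_of_set X)"
    using regular_space_euclidean regular_space_subtopology by blast
  moreover have "(top_of_set X) closure_of S = topspace (top_of_set X)" if "S \<in> C" for S
  proof -
    have "S \<subseteq> X" "X \<subseteq> closure S"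
      using assms(3) [OF that] by (auto dest: openin_imp_subset)
    then show ?thesis
      by (auto simp: closure_of_subtopology Int_absorb1)
  qed
  ultimately have "(top_of_set X) closure_of \<Inter>C = topspace (top_of_set X)"
    using Baire_category [of "top_of_set X" C] assms(2,3) by blast
  then have "X \<inter> closure (X \<inter> \<Inter>C) = X"
    by (simp add: closure_of_subtopology)
  then show ?thesis by blast
qed

lemma openin_points_entering:
  assumes "continuous_on X T" "T ` X \<subseteq> X" "openin (top_of_set X) V"
  shows "openin (top_of_set X) {x \<in> X. \<exists>i\<in>N. (T ^^ i) x \<in> V}"
proof -
  have "openin (top_of_set X) (\<Union>i\<in>N. X \<inter> (T ^^ i) -` V)"
    using openin_funpow_preimage [OF assms] by (intro openin_Union) blast
  moreover have "{x \<in> X. \<exists>i\<in>N. (T ^^ i) x \<in> V} = (\<Union>i\<in>N. X \<inter> (T ^^ i) -` V)"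
    by auto
  ultimately show ?thesis
    by (simp only:)
qed

lemma dense_points_entering:
  assumes "\<And>U. opene X U \<Longrightarrow> N \<inter> N_T T U V \<noteq> {}"
  shows "X \<subseteq> closure {x \<in> X. \<exists>i\<in>N. (T ^^ i) x \<in> V}"
proof
  fix y assume y: "y \<in> X"
  show "y \<in> closure {x \<in> X. \<exists>i\<in>N. (T ^^ i) x \<in> V}"
    unfolding closure_approachable
  proof (intro allI impI)
    fix e :: real assume "e > 0"
    obtain n where n: "n \<in> N" "n \<in> N_T T (X \<inter> ball y e) V"
      using assms [OF opene_Int_ball [OF y \<open>e > 0\<close>]] by blast
    then obtain u where u: "u \<in> X \<inter> ball y e" "(T ^^ n) u \<in> V"
      unfolding N_T_def by blast
    with n(1) have "u \<in> {x \<in> X. \<exists>i\<in>N. (T ^^ i) x \<in> V}"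
      by blast
    with u(1) show "\<exists>z\<in>{x \<in> X. \<exists>i\<in>N. (T ^^ i) x \<in> V}. dist z y < e"
      by (auto simp: dist_commute)
  qed
qed

lemma dense_gdelta_S_transitive_points:
  fixes X :: "'a::metric_space set"
  assumes cX: "compact X" and cT: "continuous_on X T" and sT: "T ` X \<subseteq> X"
    and ts: "\<And>U V W. opene X U \<Longrightarrow> opene X V \<Longrightarrow> opene X W \<Longrightarrow> S_T T W \<delta> \<inter> N_T T U V \<noteq> {}"
  obtains X0 where "X0 \<subseteq> X" "X \<subseteq> closure X0" "gdelta_in (top_of_set X) X0"
    "\<And>x. x \<in> X0 \<Longrightarrow> S_transitive_point X T \<delta> x"
proof -
  obtain B where cB: "countable B" and Bop: "\<And>b. b \<in> B \<Longrightarrow> opene X b"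
    and Bbase: "\<And>W. opene X W \<Longrightarrow> \<exists>b\<in>B. b \<subseteq> W"
    using compact_countable_opene_base [OF cX] by blast
  define G where "G = (\<lambda>(b, c). {x \<in> X. \<exists>i\<in>S_T T b \<delta>. (T ^^ i) x \<in> c})"
  define X0 where "X0 = X \<inter> \<Inter>(G ` (B \<times> B))"
  have G_props: "openin (top_of_set X) S \<and> X \<subseteq> closure S" if S: "S \<in> G ` (B \<times> B)" for S
  proof -
    obtain b c where "b \<in> B" "c \<in> B" "S = G (b, c)"
      using S by auto
    moreover have "openin (top_of_set X) (G (b, c))"
      unfolding G_def case_prod_conv
      using openin_points_entering [OF cT sT] Bop [OF \<open>c \<in> B\<close>] by (simp add: opene_def)
    moreover have "X \<subseteq> closure (G (b, c))"
      unfolding G_def case_prod_conv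
      by (rule dense_points_entering) (rule ts [OF _ Bop [OF \<open>c \<in> B\<close>] Bop [OF \<open>b \<in> B\<close>]])
    ultimately show ?thesis by blast
  qed
  have "X0 \<subseteq> X" by (simp add: X0_def)
  moreover have "X \<subseteq> closure X0"
    unfolding X0_def using cB G_props by (intro compact_Baire [OF cX]) auto
  moreover have "gdelta_in (top_of_set X) X0"
  proof -
    have "X0 = \<Inter>(insert X (G ` (B \<times> B)))"
      by (simp add: X0_def)
    also have "gdelta_in (top_of_set X) \<dots>"
      using cB G_props by (intro gdelta_in_Inter open_imp_gdelta_in) auto
    finally show ?thesis .
  qed
  moreover have "S_transitive_point X T \<delta> x" if "x \<in> X0" for x
    unfolding S_transitive_point_def
  proof (intro allI impI)
    fix W V assume "opene X W" "opene X V"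
    then obtain b c where bc: "b \<in> B" "b \<subseteq> W" "c \<in> B" "c \<subseteq> V"
      using Bbase by blast
    then obtain i where "i \<in> S_T T b \<delta>" "(T ^^ i) x \<in> c"
      using \<open>x \<in> X0\<close> unfolding X0_def G_def by blast
    then show "\<exists>i\<in>S_T T W \<delta>. (T ^^ i) x \<in> V"
      using bc S_T_mono [OF bc(2)] by blast
  qed
  ultimately show ?thesis by (rule that)
qed

lemma transitively_sensitive_imp_dense_gdelta_omega_F:
  fixes X :: "'a::metric_space set"
  assumes cX: "compact X" and cT: "continuous_on X T" and sT: "T ` X = X"
    and "transitively_sensitive X T"
  obtains \<delta> X0 where "\<delta> > 0" "X0 \<subseteq> X" "X \<subseteq> closure X0" "gdelta_in (top_of_set X) X0"
    "\<And>x. x \<in> X0 \<Longrightarrow> omega_F T (S_fam X T \<delta>) x = X"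
proof -
  obtain \<delta> where "\<delta> > 0" and ts: "\<forall>U V W. opene X U \<longrightarrow> opene X V \<longrightarrow> opene X W
      \<longrightarrow> S_T T W \<delta> \<inter> N_T T U V \<noteq> {}"
    using assms(4) unfolding transitively_sensitive_def by blast
  obtain X0 where X0: "X0 \<subseteq> X" "X \<subseteq> closure X0" "gdelta_in (top_of_set X) X0"
    "\<And>x. x \<in> X0 \<Longrightarrow> S_transitive_point X T \<delta> x"
    using dense_gdelta_S_transitive_points [OF cX cT _ ts [rule_format]] sT by blast
  show ?thesis
  proof (rule that [OF \<open>\<delta> > 0\<close> X0(1-3)])
    fix x assume "x \<in> X0"
    with X0(1,4) show "omega_F T (S_fam X T \<delta>) x = X"
      using omega_F_S_fam_eq_iff [OF cX sT] by blast
  qed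
qed

theorem proposition4p3:
  fixes X :: "'a::metric_space set" and T :: "'a \<Rightarrow> 'a"
  assumes "compact X"
    and "\<exists>x\<in>X. \<exists>y\<in>X. x \<noteq> y"
    and "\<forall>x\<in>X. x islimpt X"
    and "continuous_on X T"
    and "T ` X = X"
  shows "(\<forall>\<delta>>0. plus_invariant (S_fam X T \<delta>))
    \<and> (transitively_sensitive X T \<longleftrightarrow>
         (\<exists>\<delta>>0. \<exists>X0. X0 \<subseteq> X \<and> X \<subseteq> closure X0 \<and> gdelta_in (top_of_set X) X0
              \<and> (\<forall>x\<in>X0. omega_F T (S_fam X T \<delta>) x = X)))
    \<and> ((\<exists>\<delta>>0. \<exists>X0. X0 \<subseteq> X \<and> X \<subseteq> closure X0 \<and> gdelta_in (top_of_set X) X0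
              \<and> (\<forall>x\<in>X0. omega_F T (S_fam X T \<delta>) x = X)) \<longleftrightarrow>
       (\<exists>\<delta>>0. \<exists>x\<in>X. omega_F T (S_fam X T \<delta>) x = X))"
proof -
  note cX = assms(1) and cT = assms(4) and sT = assms(5)
  have "X \<noteq> {}" using assms(2) by blast
  have plus_inv: "\<forall>\<delta>>0. plus_invariant (S_fam X T \<delta>)"
    using plus_invariant_S_fam [OF cT sT] by blast
  have ts_generic: "\<exists>\<delta>>0. \<exists>X0. X0 \<subseteq> X \<and> X \<subseteq> closure X0 \<and> gdelta_in (top_of_set X) X0
      \<and> (\<forall>x\<in>X0. omega_F T (S_fam X T \<delta>) x = X)" if "transitively_sensitive X T"
    using transitively_sensitive_imp_dense_gdelta_omega_F [OF cX cT sT that] by metis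
  have generic_point: "\<exists>\<delta>>0. \<exists>x\<in>X. omega_F T (S_fam X T \<delta>) x = X"
    if "\<exists>\<delta>>0. \<exists>X0. X0 \<subseteq> X \<and> X \<subseteq> closure X0 \<and> gdelta_in (top_of_set X) X0
      \<and> (\<forall>x\<in>X0. omega_F T (S_fam X T \<delta>) x = X)"
    using that \<open>X \<noteq> {}\<close> by (metis closure_empty ex_in_conv subsetD)
  have point_ts: "transitively_sensitive X T"
    if "\<exists>\<delta>>0. \<exists>x\<in>X. omega_F T (S_fam X T \<delta>) x = X"
    using that transitively_sensitive_if_S_transitive_point [OF cT sT]
      omega_F_S_fam_eq_iff [OF cX sT] by blast
  show ?thesis
    using plus_inv ts_generic generic_point point_ts by blast
qed

end
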